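(* Let $X$ be a compact metric space with metric $d$, let $f\colon X\to X$ be a continuous map with the s-limit shadowing property, let $C\in\mathcal{C}(f)$ and $D\in\mathcal{D}(C)$, and let $\mathcal{F},\mathcal{G}$ be full Furstenberg families. Let $n\ge2$ and $\delta>0$. If there is an $(\mathcal{F},\mathcal{G})$-$\delta$-scrambled $n$-tuple $(a_1,\dots,a_n)\in[V^s(D)]^n$ for $f$, then for every $0<r<\delta$, $V^s(D)$ is dense $(\mathcal{F},\mathcal{G})$-$n$-$r$-chaotic for $f$.
   Context: A $\delta$-chain of $f$ ($\delta>0$) is a finite sequence $(x_i)_{i=0}^k$, $k\ge1$, with $d(f(x_i),x_{i+1})\le\delta$ for $0\le i\le k-1$; it is a $\delta$-cycle if $x_0=x_k$, with length $k$. Write $x\to y$ if for every $\delta>0$ there is a $\delta$-chain from $x$ to $y$. Let $CR(f)=\{x\colon x\to x\}$; on $CR(f)$ let $x\leftrightarrow y$ iff $x\to y$ and $y\to x$; its classes are the chain components, forming $\mathcal{C}(f)$. For $C\in\mathcal{C}(f)$, $\delta>0$, let $m=m(C,\delta)$ be the gcd of the lengths of all $\delta$-cycles of $f|_C$, and for $x,y\in C$ let $x\sim_{C,\delta}y$ iff there is a $\delta$-chain of $f|_C$ from $x$ to $y$ of length divisible by $m$; $\mathcal{D}(C,\delta)$ is the set of its equivalence classes. Let $x\sim_C y$ iff $x\sim_{C,\delta}y$ for all $\delta>0$; $\mathcal{D}(C)$ is its set of classes. For $D\in\mathcal{D}(C)$, $D_\delta$ is the element of $\mathcal{D}(C,\delta)$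 containing $D$. $W^s(C)=\{x\colon\lim_i d(f^i(x),C)=0\}$ and $V^s(D)=\bigcap_{\delta>0}\{x\in W^s(C)\colon\lim_i d(f^i(x),f^i(D_\delta))=0\}$. $f$ has the s-limit shadowing property if for every $\epsilon>0$ there is $\delta>0$ such that for every sequence $(x_i)_{i\ge0}$ with $d(f(x_i),x_{i+1})\le\delta$ for all $i$ and $d(f(x_i),x_{i+1})\to0$ there is $x\in X$ with $d(f^i(x),x_i)\le\epsilon$ for all $i$ and $d(f^i(x),x_i)\to0$. A Furstenberg family is a nonempty proper family $\mathcal{F}\subsetneq 2^{\mathbb{N}_0}$ closed under taking supersets; it is full if $\{i\in A\colon i\ge n\}\in\mathcal{F}$ for all $A\in\mathcal{F}$, $n\ge0$. For $x_1,\dots,x_n\in X$, $r>0$: $S_f(x_1,\dots,x_n;r)=\{i\in\mathbb{N}_0\colon\min_{j<k}d(f^i(x_j),f^i(x_k))>r\}$ and $T_f(x_1,\dots,x_n;r)=\{i\in\mathbb{N}_0\colon\max_{j<k}d(f^i(x_j),f^i(x_k))<r\}$. $(x_1,\dots,x_n)$ is $(\mathcal{F},\mathcal{G})$-$\delta$-scrambled for $f$ if $S_f(x_1,\dots,x_n;\delta)\in\mathcal{F}$ and $T_f(x_1,\dots,x_n;\epsilon)\in\mathcal{G}$ for all $\epsilon>0$. A nonempty $Y\subset X$ is dense $(\mathcal{F},\mathcal{G})$-$n$-$\delta$-chaotic for $f$ if the set of $(\mathcal{F},\mathcal{G})$-$\delta$-scrambled $n$-tuples in $Y^n$ is dense in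 $Y^n$. *)

theory Defs
  imports "HOL-Analysis.Analysis"
begin

definition dchain :: "('a::metric_space \<Rightarrow> 'a) \<Rightarrow> real \<Rightarrow> (nat \<Rightarrow> 'a) \<Rightarrow> nat \<Rightarrow> bool" where
  "dchain f \<delta> \<xi> k \<longleftrightarrow> k \<ge> 1 \<and> (\<forall>i<k. dist (f (\<xi> i)) (\<xi> (Suc i)) \<le> \<delta>)"

definition chain_to :: "('a::metric_space \<Rightarrow> 'a) \<Rightarrow> 'a \<Rightarrow> 'a \<Rightarrow> bool" where
  "chain_to f x y \<longleftrightarrow> (\<forall>\<delta>>0. \<exists>\<xi> k. dchain f \<delta> \<xi> k \<and> \<xi> 0 = x \<and> \<xi> k = y)"

definition CR :: "('a::metric_space \<Rightarrow> 'a) \<Rightarrow> 'a set" where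
  "CR f = {x. chain_to f x x}"

definition chain_components :: "('a::metric_space \<Rightarrow> 'a) \<Rightarrow> 'a set set" where
  "chain_components f =
     {{y \<in> CR f. chain_to f x y \<and> chain_to f y x} | x. x \<in> CR f}"

definition dchain_on :: "('a::metric_space \<Rightarrow> 'a) \<Rightarrow> 'a set \<Rightarrow> real \<Rightarrow> (nat \<Rightarrow> 'a) \<Rightarrow> nat \<Rightarrow> bool" where
  "dchain_on f C \<delta> \<xi> k \<longleftrightarrow> dchain f \<delta> \<xi> k \<and> (\<forall>i\<le>k. \<xi> i \<in> C)"

definition period :: "('a::metric_space \<Rightarrow> 'a) \<Rightarrow> 'a set \<Rightarrow> real \<Rightarrow> nat" where
  "period f C \<delta> = Gcd {k. \<exists>\<xi>. dchain_on f C \<delta> \<xi> k \<and> \<xi> 0 = \<xi> k}"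

definition sim_delta :: "('a::metric_space \<Rightarrow> 'a) \<Rightarrow> 'a set \<Rightarrow> real \<Rightarrow> 'a \<Rightarrow> 'a \<Rightarrow> bool" where
  "sim_delta f C \<delta> x y \<longleftrightarrow> x \<in> C \<and> y \<in> C \<and>
     (\<exists>\<xi> k. dchain_on f C \<delta> \<xi> k \<and> \<xi> 0 = x \<and> \<xi> k = y \<and> period f C \<delta> dvd k)"

definition Dclasses_delta :: "('a::metric_space \<Rightarrow> 'a) \<Rightarrow> 'a set \<Rightarrow> real \<Rightarrow> 'a set set" where
  "Dclasses_delta f C \<delta> = {{y. sim_delta f C \<delta> x y} | x. x \<in> C}"

definition sim_C :: "('a::metric_space \<Rightarrow> 'a) \<Rightarrow> 'a set \<Rightarrow> 'a \<Rightarrow> 'a \<Rightarrow> bool" where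
  "sim_C f C x y \<longleftrightarrow> (\<forall>\<delta>>0. sim_delta f C \<delta> x y)"

definition Dclasses :: "('a::metric_space \<Rightarrow> 'a) \<Rightarrow> 'a set \<Rightarrow> 'a set set" where
  "Dclasses f C = {{y. sim_C f C x y} | x. x \<in> C}"

definition D_delta :: "('a::metric_space \<Rightarrow> 'a) \<Rightarrow> 'a set \<Rightarrow> real \<Rightarrow> 'a set \<Rightarrow> 'a set" where
  "D_delta f C \<delta> D = (THE E. E \<in> Dclasses_delta f C \<delta> \<and> D \<subseteq> E)"

definition Ws :: "('a::metric_space \<Rightarrow> 'a) \<Rightarrow> 'a set \<Rightarrow> 'a set" where
  "Ws f C = {x. (\<lambda>i. infdist ((f ^^ i) x) C) \<longlonglongrightarrow> 0}"

definition Vs :: "('a::metric_space \<Rightarrow> 'a) \<Rightarrow> 'a set \<Rightarrow> 'a set \<Rightarrow> 'a set" where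
  "Vs f C D = (\<Inter>\<delta>\<in>{\<delta>. \<delta> > 0}.
     {x \<in> Ws f C. (\<lambda>i. infdist ((f ^^ i) x) ((f ^^ i) ` D_delta f C \<delta> D)) \<longlonglongrightarrow> 0})"

definition s_limit_shadowing :: "('a::metric_space \<Rightarrow> 'a) \<Rightarrow> bool" where
  "s_limit_shadowing f \<longleftrightarrow>
    (\<forall>\<epsilon>>0. \<exists>\<delta>>0. \<forall>\<xi> :: nat \<Rightarrow> 'a.
       (\<forall>i. dist (f (\<xi> i)) (\<xi> (Suc i)) \<le> \<delta>) \<and>
       (\<lambda>i. dist (f (\<xi> i)) (\<xi> (Suc i))) \<longlonglongrightarrow> 0 \<longrightarrow>
       (\<exists>x. (\<forall>i. dist ((f ^^ i) x) (\<xi> i) \<le> \<epsilon>) \<and>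
            (\<lambda>i. dist ((f ^^ i) x) (\<xi> i)) \<longlonglongrightarrow> 0))"

definition furstenberg_family :: "nat set set \<Rightarrow> bool" where
  "furstenberg_family \<F> \<longleftrightarrow> \<F> \<noteq> {} \<and> \<F> \<noteq> UNIV \<and>
     (\<forall>A B. A \<in> \<F> \<and> A \<subseteq> B \<longrightarrow> B \<in> \<F>)"

definition full_family :: "nat set set \<Rightarrow> bool" where
  "full_family \<F> \<longleftrightarrow> furstenberg_family \<F> \<and> (\<forall>A\<in>\<F>. \<forall>n. {i \<in> A. i \<ge> n} \<in> \<F>)"

text \<open>An n-tuple is represented by a function x :: nat => 'a, using x 0, ..., x (n-1).\<close>
definition S_set :: "('a::metric_space \<Rightarrow> 'a) \<Rightarrow> nat \<Rightarrow> (nat \<Rightarrow> 'a) \<Rightarrow> real \<Rightarrow> nat set" where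
  "S_set f n x r = {i. \<forall>j k. j < k \<and> k < n \<longrightarrow> dist ((f ^^ i) (x j)) ((f ^^ i) (x k)) > r}"

definition T_set :: "('a::metric_space \<Rightarrow> 'a) \<Rightarrow> nat \<Rightarrow> (nat \<Rightarrow> 'a) \<Rightarrow> real \<Rightarrow> nat set" where
  "T_set f n x r = {i. \<forall>j k. j < k \<and> k < n \<longrightarrow> dist ((f ^^ i) (x j)) ((f ^^ i) (x k)) < r}"

definition scrambled :: "('a::metric_space \<Rightarrow> 'a) \<Rightarrow> nat set set \<Rightarrow> nat set set \<Rightarrow> nat \<Rightarrow> real \<Rightarrow> (nat \<Rightarrow> 'a) \<Rightarrow> bool" where
  "scrambled f \<F> \<G> n \<delta> x \<longleftrightarrow> S_set f n x \<delta> \<in> \<F> \<and> (\<forall>\<epsilon>>0. T_set f n x \<epsilon> \<in> \<G>)"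

text \<open>Density in Y^n (product topology, equivalently the max metric).\<close>
definition dense_chaotic :: "('a::metric_space \<Rightarrow> 'a) \<Rightarrow> nat set set \<Rightarrow> nat set set \<Rightarrow> nat \<Rightarrow> real \<Rightarrow> 'a set \<Rightarrow> bool" where
  "dense_chaotic f \<F> \<G> n \<delta> Y \<longleftrightarrow> Y \<noteq> {} \<and>
     (\<forall>y. (\<forall>j<n. y j \<in> Y) \<longrightarrow> (\<forall>\<epsilon>>0. \<exists>x. (\<forall>j<n. x j \<in> Y \<and> dist (x j) (y j) < \<epsilon>) \<and>
          scrambled f \<F> \<G> n \<delta> x))"

end

theory Submission
  imports Defs
begin

text \<open>
  It suffices to find, for every j < n, a point x j arbitrarily close to a given y j \<in> V^s(D) that
  is asymptotic to a j: asymptotic points of V^s(D) stay in V^s(D), and since the families are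
  full, a tuple asymptotic to a delta-scrambled tuple is r-scrambled for every r < delta.
  Such a point is obtained by s-limit shadowing a pseudo-orbit that follows y j up to a late
  time i, jumps into the cyclic class D_beta, runs inside C along a beta-chain of a fixed length L
  and then lands on the orbit of a j. The jumps are small because the iterates of y j and a j
  approach the iterates of D_beta. A chain of length exactly L exists between any two
  equivalent points once L is a large multiple of the period m(C, beta): the lengths of the
  beta-cycles through a point form an additive semigroup of naturals with gcd m(C, beta), which
  contains all large multiples of m(C, beta), and by compactness all points of C are joined by
  chains of uniformly bounded length.
\<close>

section \<open>Chains of prescribed length\<close>

definition dchain_from_to :: "('a::metric_space \<Rightarrow> 'a) \<Rightarrow> 'a set \<Rightarrow> real \<Rightarrow> nat \<Rightarrow> 'a \<Rightarrow> 'a \<Rightarrow> bool" where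
  "dchain_from_to f C \<delta> k u w \<longleftrightarrow> (\<exists>\<xi>. dchain_on f C \<delta> \<xi> k \<and> \<xi> 0 = u \<and> \<xi> k = w)"

lemma dchain_on_UNIV [simp]: "dchain_on f UNIV \<delta> \<xi> k \<longleftrightarrow> dchain f \<delta> \<xi> k"
  unfolding dchain_on_def by blast

lemma chain_to_iff_dchain_from_to: "chain_to f u w \<longleftrightarrow> (\<forall>\<delta>>0. \<exists>k. dchain_from_to f UNIV \<delta> k u w)"
  unfolding chain_to_def dchain_from_to_def dchain_on_UNIV by (subst ex_comm) (rule refl)

lemma dchain_from_to_pos: "dchain_from_to f C \<delta> k u w \<Longrightarrow> 1 \<le> k"
  unfolding dchain_from_to_def dchain_on_def dchain_def by blast

lemma dchain_from_to_mem: "dchain_from_to f C \<delta> k u w \<Longrightarrow> u \<in> C \<and> w \<in> C"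
  unfolding dchain_from_to_def dchain_on_def by fastforce

lemma dchain_mono: "dchain f \<delta> \<xi> k \<Longrightarrow> \<delta> \<le> \<delta>' \<Longrightarrow> dchain f \<delta>' \<xi> k"
  unfolding dchain_def by (blast intro: order_trans)

lemma dchain_from_to_mono:
  "dchain_from_to f C \<delta> k u w \<Longrightarrow> \<delta> \<le> \<delta>' \<Longrightarrow> C \<subseteq> C' \<Longrightarrow> dchain_from_to f C' \<delta>' k u w"
  unfolding dchain_from_to_def dchain_on_def using dchain_mono by blast

lemma dchain_append:
  assumes "dchain f \<delta> \<xi> k" "dchain f \<delta> \<zeta> l" "\<xi> k = \<zeta> 0"
  shows "dchain f \<delta> (\<lambda>i. if i \<le> k then \<xi> i else \<zeta> (i - k)) (k + l)"
  unfolding dchain_def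
proof (intro conjI allI impI)
  show "1 \<le> k + l" using assms(1) by (simp add: dchain_def)
  fix i assume "i < k + l"
  then consider "i < k" | "i = k" | "k < i" "i - k < l" by linarith
  then show "dist (f (if i \<le> k then \<xi> i else \<zeta> (i - k))) (if Suc i \<le> k then \<xi> (Suc i) else \<zeta> (Suc i - k)) \<le> \<delta>"
    using assms unfolding dchain_def by cases (auto simp: Suc_diff_le)
qed

lemma dchain_from_to_trans:
  assumes "dchain_from_to f C \<delta> k u v" "dchain_from_to f C \<delta> l v w"
  shows "dchain_from_to f C \<delta> (k + l) u w"
proof -
  obtain \<xi> where \<xi>: "dchain_on f C \<delta> \<xi> k" "\<xi> 0 = u" "\<xi> k = v"
    using assms(1) unfolding dchain_from_to_def by blast
  obtain \<zeta> where \<zeta>: "dchain_on f C \<delta> \<zeta> l" "\<zeta> 0 = v" "\<zeta> l = w"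
    using assms(2) unfolding dchain_from_to_def by blast
  have "1 \<le> l" using \<zeta>(1) unfolding dchain_on_def dchain_def by blast
  then show ?thesis
    using dchain_append[of f \<delta> \<xi> k \<zeta> l] \<xi> \<zeta> unfolding dchain_from_to_def dchain_on_def
    by (intro exI[of _ "\<lambda>i. if i \<le> k then \<xi> i else \<zeta> (i - k)"]) auto
qed

lemma dchain_on_split:
  assumes "dchain_on f C \<delta> \<xi> k" "0 < i" "i < k"
  shows "dchain_from_to f C \<delta> i (\<xi> 0) (\<xi> i)" "dchain_from_to f C \<delta> (k - i) (\<xi> i) (\<xi> k)"
proof -
  show "dchain_from_to f C \<delta> i (\<xi> 0) (\<xi> i)"
    using assms unfolding dchain_from_to_def dchain_on_def dchain_def by (intro exI[of _ \<xi>]) auto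
  show "dchain_from_to f C \<delta> (k - i) (\<xi> i) (\<xi> k)"
    using assms unfolding dchain_from_to_def dchain_on_def dchain_def
    by (intro exI[of _ "\<lambda>j. \<xi> (j + i)"]) auto
qed

lemma dchain_from_to_orbit:
  assumes "\<forall>z\<in>C. f z \<in> C" "u \<in> C" "1 \<le> k" "0 \<le> \<delta>"
  shows "dchain_from_to f C \<delta> k u ((f ^^ k) u)"
proof -
  have "(f ^^ i) u \<in> C" for i using assms(1,2) by (induction i) auto
  then show ?thesis unfolding dchain_from_to_def dchain_on_def dchain_def using assms(3,4)
    by (intro exI[of _ "\<lambda>i. (f ^^ i) u"]) auto
qed

lemma dchain_perturb:
  assumes "dchain f \<delta> \<xi> k" "\<forall>i\<le>k. dist (\<xi> i) (\<xi>' i) \<le> e"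
    and "\<forall>a b. dist a b \<le> e \<longrightarrow> dist (f a) (f b) \<le> g"
  shows "dchain f (g + \<delta> + e) \<xi>' k"
  unfolding dchain_def
proof (intro conjI allI impI)
  show "1 \<le> k" using assms(1) unfolding dchain_def by blast
  fix i assume "i < k"
  then have "dist (f (\<xi>' i)) (f (\<xi> i)) \<le> g" "dist (f (\<xi> i)) (\<xi> (Suc i)) \<le> \<delta>"
    "dist (\<xi> (Suc i)) (\<xi>' (Suc i)) \<le> e"
    using assms unfolding dchain_def by (auto simp: dist_commute)
  then show "dist (f (\<xi>' i)) (\<xi>' (Suc i)) \<le> g + \<delta> + e"
    using dist_triangle[of "f (\<xi>' i)" "\<xi>' (Suc i)" "f (\<xi> i)"]
      dist_triangle[of "f (\<xi> i)" "\<xi>' (Suc i)" "\<xi> (Suc i)"] by linarith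
qed

lemma chain_to_trans: "chain_to f u v \<Longrightarrow> chain_to f v w \<Longrightarrow> chain_to f u w"
  unfolding chain_to_iff_dchain_from_to by (meson dchain_from_to_trans)

lemma chain_to_step: "chain_to f u (f u)"
  unfolding chain_to_iff_dchain_from_to
proof (intro allI impI)
  fix \<delta> :: real assume "\<delta> > 0"
  then show "\<exists>k. dchain_from_to f UNIV \<delta> k u (f u)"
    using dchain_from_to_orbit[of UNIV f u 1 \<delta>] by auto
qed

section \<open>Chain components of a compact system\<close>

lemma chain_components_chain_to:
  assumes "C \<in> chain_components f" "u \<in> C" "w \<in> C"
  shows "chain_to f u w"
  using assms chain_to_trans unfolding chain_components_def by blast

lemma chain_components_memI:
  assumes "C \<in> chain_components f" "u \<in> C" "chain_to f u z" "chain_to f z u"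
  shows "z \<in> C"
proof -
  obtain x where C: "C = {y \<in> CR f. chain_to f x y \<and> chain_to f y x}"
    using assms(1) unfolding chain_components_def by blast
  have "chain_to f z z" using assms(3,4) chain_to_trans by blast
  then show ?thesis using assms(2-4) chain_to_trans unfolding C CR_def by blast
qed

lemma infdist_less_imp_dist_less:
  assumes "A \<noteq> {}" "infdist x A < e"
  obtains a where "a \<in> A" "dist x a < e"
proof -
  have "bdd_below (dist x ` A)" by (rule bdd_belowI2[of _ 0]) simp
  then show thesis using assms that by (auto simp: infdist_notempty cINF_less_iff)
qed

locale compact_dynamical_system =
  fixes f :: "'a::metric_space \<Rightarrow> 'a"
  assumes compact_UNIV: "compact (UNIV :: 'a set)"
    and continuous_f: "continuous_on UNIV f"
begin

lemma dchain_robust: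
  assumes "\<delta> > 0"
  obtains \<eta> where "0 < \<eta>" "\<eta> \<le> \<delta>/3"
    "\<And>\<xi> \<xi>' k. dchain f (\<delta>/3) \<xi> k \<Longrightarrow> \<forall>i\<le>k. dist (\<xi> i) (\<xi>' i) \<le> \<eta> \<Longrightarrow> dchain f \<delta> \<xi>' k"
proof -
  have "uniformly_continuous_on UNIV f"
    using compact_uniformly_continuous compact_UNIV continuous_f by blast
  moreover have "\<delta>/3 > 0" using assms by simp
  ultimately obtain e where e: "0 < e" "\<And>a b. dist a b < e \<Longrightarrow> dist (f a) (f b) < \<delta>/3"
    unfolding uniformly_continuous_on_def by (metis UNIV_I)
  define \<eta> where "\<eta> = min (e/2) (\<delta>/3)"
  have modulus: "\<forall>a b. dist a b \<le> \<eta> \<longrightarrow> dist (f a) (f b) \<le> \<delta>/3"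
    using e by (auto simp: \<eta>_def intro: less_imp_le)
  have "dchain f \<delta> \<xi>' k" if "dchain f (\<delta>/3) \<xi> k" "\<forall>i\<le>k. dist (\<xi> i) (\<xi>' i) \<le> \<eta>" for \<xi> \<xi>' k
  proof (rule dchain_mono)
    show "dchain f (\<delta>/3 + \<delta>/3 + \<eta>) \<xi>' k" using dchain_perturb[OF that modulus] .
    show "\<delta>/3 + \<delta>/3 + \<eta> \<le> \<delta>" by (simp add: \<eta>_def)
  qed
  moreover have "0 < \<eta>" "\<eta> \<le> \<delta>/3" using e assms by (auto simp: \<eta>_def)
  ultimately show thesis using that by blast
qed

lemma dchain_from_to_robust:
  assumes "\<delta> > 0"
  obtains \<eta> where "0 < \<eta>" "\<eta> \<le> \<delta>/3"
    "\<And>C k u w u' w'. dchain_from_to f C (\<delta>/3) k u w \<Longrightarrow> dist u u' \<le> \<eta> \<Longrightarrow> dist w w' \<le> \<eta> \<Longrightarrow>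
       u' \<in> C \<Longrightarrow> w' \<in> C \<Longrightarrow> dchain_from_to f C \<delta> k u' w'"
proof -
  obtain \<eta> where \<eta>: "0 < \<eta>" "\<eta> \<le> \<delta>/3"
    and robust: "\<And>\<xi> \<xi>' k. dchain f (\<delta>/3) \<xi> k \<Longrightarrow> \<forall>i\<le>k. dist (\<xi> i) (\<xi>' i) \<le> \<eta> \<Longrightarrow> dchain f \<delta> \<xi>' k"
    using dchain_robust[OF assms] by blast
  have "dchain_from_to f C \<delta> k u' w'"
    if ch: "dchain_from_to f C (\<delta>/3) k u w"
      and ends: "dist u u' \<le> \<eta>" "dist w w' \<le> \<eta>" "u' \<in> C" "w' \<in> C"
    for C k u w u' w'
  proof -
    obtain \<xi> where \<xi>: "dchain f (\<delta>/3) \<xi> k" "\<forall>i\<le>k. \<xi> i \<in> C" "\<xi> 0 = u" "\<xi> k = w"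
      using ch unfolding dchain_from_to_def dchain_on_def by blast
    have "1 \<le> k" using \<xi>(1) unfolding dchain_def by blast
    have "\<forall>i\<le>k. dist (\<xi> i) ((\<xi>(0 := u', k := w')) i) \<le> \<eta>"
      using \<xi>(3,4) ends(1,2) \<eta>(1) by auto
    then show ?thesis using robust[OF \<xi>(1)] \<xi>(2) ends(3,4) \<open>1 \<le> k\<close>
      unfolding dchain_from_to_def dchain_on_def by (intro exI[of _ "\<xi>(0 := u', k := w')"]) auto
  qed
  with \<eta> show thesis by (rule that)
qed

lemma chain_to_image_self:
  assumes "chain_to f z z"
  shows "chain_to f (f z) z"
  unfolding chain_to_iff_dchain_from_to
proof (intro allI impI)
  fix \<delta> :: real assume "\<delta> > 0"
  obtain \<eta> where \<eta>: "0 < \<eta>" "\<eta> \<le> \<delta>/3"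
    and robust: "\<And>C k u w u' w'. dchain_from_to f C (\<delta>/3) k u w \<Longrightarrow> dist u u' \<le> \<eta> \<Longrightarrow>
      dist w w' \<le> \<eta> \<Longrightarrow> u' \<in> C \<Longrightarrow> w' \<in> C \<Longrightarrow> dchain_from_to f C \<delta> k u' w'"
    using dchain_from_to_robust[OF \<open>\<delta> > 0\<close>] by blast
  obtain k where k: "dchain_from_to f UNIV \<eta> k z z"
    using assms \<eta>(1) unfolding chain_to_iff_dchain_from_to by blast
  \<comment> \<open>going around the cycle twice makes the chain long enough that its second point,
    which is close to f z, can be replaced by f z\<close>
  obtain \<xi> where \<xi>: "dchain f \<eta> \<xi> (k + k)" "\<xi> 0 = z" "\<xi> (k + k) = z"
    using dchain_from_to_trans[OF k k] unfolding dchain_from_to_def by auto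
  have "1 < k + k" using dchain_from_to_pos[OF k] by simp
  then have "dchain_from_to f UNIV \<eta> (k + k - 1) (\<xi> 1) z"
    using dchain_on_split(2)[of f UNIV \<eta> \<xi> "k + k" 1] \<xi> by simp
  then have "dchain_from_to f UNIV (\<delta>/3) (k + k - 1) (\<xi> 1) z"
    using \<eta>(2) by (rule dchain_from_to_mono) simp
  moreover have "dist (f (\<xi> 0)) (\<xi> (Suc 0)) \<le> \<eta>"
    using \<xi>(1) \<open>1 < k + k\<close> unfolding dchain_def by simp
  then have "dist (\<xi> 1) (f z) \<le> \<eta>" by (simp add: \<xi>(2) dist_commute)
  ultimately have "dchain_from_to f UNIV \<delta> (k + k - 1) (f z) z"
    using robust \<eta>(1) by simp
  then show "\<exists>k. dchain_from_to f UNIV \<delta> k (f z) z" by blast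
qed

lemma chain_to_limit:
  assumes chains: "\<And>n. \<exists>k. dchain_from_to f UNIV (d n) k (x n) (z n)"
    and "d \<longlonglongrightarrow> 0" "x \<longlonglongrightarrow> a" "z \<longlonglongrightarrow> b"
  shows "chain_to f a b"
  unfolding chain_to_iff_dchain_from_to
proof (intro allI impI)
  fix \<delta> :: real assume "\<delta> > 0"
  obtain \<eta> where \<eta>: "0 < \<eta>" "\<eta> \<le> \<delta>/3"
    and robust: "\<And>C k u w u' w'. dchain_from_to f C (\<delta>/3) k u w \<Longrightarrow> dist u u' \<le> \<eta> \<Longrightarrow>
      dist w w' \<le> \<eta> \<Longrightarrow> u' \<in> C \<Longrightarrow> w' \<in> C \<Longrightarrow> dchain_from_to f C \<delta> k u' w'"
    using dchain_from_to_robust[OF \<open>\<delta> > 0\<close>] by blast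
  have "eventually (\<lambda>n. d n < \<delta>/3) sequentially"
    using order_tendstoD(2)[OF \<open>d \<longlonglongrightarrow> 0\<close>, of "\<delta>/3"] \<open>\<delta> > 0\<close> by simp
  moreover have "eventually (\<lambda>n. dist (x n) a < \<eta>) sequentially"
    "eventually (\<lambda>n. dist (z n) b < \<eta>) sequentially"
    using tendstoD[OF \<open>x \<longlonglongrightarrow> a\<close> \<eta>(1)] tendstoD[OF \<open>z \<longlonglongrightarrow> b\<close> \<eta>(1)] by auto
  ultimately obtain n where n: "d n < \<delta>/3" "dist (x n) a < \<eta>" "dist (z n) b < \<eta>"
    by (metis (mono_tags, lifting) eventually_conj eventually_sequentially order_refl)
  obtain k where "dchain_from_to f UNIV (d n) k (x n) (z n)" using chains by blast
  then have "dchain_from_to f UNIV (\<delta>/3) k (x n) (z n)"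
    using dchain_from_to_mono n(1) by (metis less_imp_le order_refl)
  then have "dchain_from_to f UNIV \<delta> k a b"
    by (rule robust) (use n in \<open>auto simp: dist_commute\<close>)
  then show "\<exists>k. dchain_from_to f UNIV \<delta> k a b" by blast
qed

end

section \<open>Cyclic decomposition of a chain component\<close>

lemma period_dvd: "dchain_from_to f C \<delta> k u u \<Longrightarrow> period f C \<delta> dvd k"
  unfolding period_def dchain_from_to_def by (rule Gcd_dvd) auto

lemma sim_delta_iff:
  "sim_delta f C \<delta> u w \<longleftrightarrow> u \<in> C \<and> w \<in> C \<and> (\<exists>k. dchain_from_to f C \<delta> k u w \<and> period f C \<delta> dvd k)"
  unfolding sim_delta_def dchain_from_to_def by blast

lemma sim_delta_trans:
  assumes "sim_delta f C \<delta> u v" "sim_delta f C \<delta> v w"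
  shows "sim_delta f C \<delta> u w"
proof -
  obtain k l where "dchain_from_to f C \<delta> k u v" "dchain_from_to f C \<delta> l v w"
    "period f C \<delta> dvd k" "period f C \<delta> dvd l"
    using assms unfolding sim_delta_iff by blast
  then show ?thesis using assms dchain_from_to_trans unfolding sim_delta_iff by (meson dvd_add)
qed

lemma nat_submonoid_mult_mem:
  fixes T :: "nat set"
  assumes "0 \<in> T" "\<And>a b. a \<in> T \<Longrightarrow> b \<in> T \<Longrightarrow> a + b \<in> T" "a \<in> T"
  shows "q * a \<in> T"
proof (induction q)
  case (Suc q)
  then show ?case using assms(2)[OF assms(3) Suc.IH] by simp
qed (simp add: assms(1))

lemma nat_submonoid_least_gap_dvd:
  fixes T :: "nat set"
  assumes "0 \<in> T" "\<And>a b. a \<in> T \<Longrightarrow> b \<in> T \<Longrightarrow> a + b \<in> T" "b \<in> T" "b + g \<in> T" "0 < g"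
    and least: "\<And>c h. c \<in> T \<Longrightarrow> c + h \<in> T \<Longrightarrow> 0 < h \<Longrightarrow> g \<le> h"
    and "a \<in> T"
  shows "g dvd a"
proof -
  have "a mod g = 0"
  proof (rule ccontr)
    assume "a mod g \<noteq> 0"
    then have "0 < a mod g" by simp
    have "(a div g) * (b + g) + a mod g = a + (a div g) * b" by (simp add: algebra_simps)
    moreover have "a + (a div g) * b \<in> T"
      using assms(2,3,7) nat_submonoid_mult_mem[OF assms(1,2)] by blast
    ultimately have "(a div g) * (b + g) + a mod g \<in> T" by simp
    moreover have "(a div g) * (b + g) \<in> T" by (rule nat_submonoid_mult_mem[OF assms(1,2,4)])
    ultimately have "g \<le> a mod g" using least \<open>0 < a mod g\<close> by blast
    then show False using mod_less_divisor[OF assms(5), of a] by linarith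
  qed
  then show ?thesis by (simp add: dvd_eq_mod_eq_0)
qed

lemma nat_submonoid_large_multiples:
  fixes T :: "nat set"
  assumes "0 \<in> T" "\<And>a b. a \<in> T \<Longrightarrow> b \<in> T \<Longrightarrow> a + b \<in> T" "b \<in> T" "b + g \<in> T" "g dvd b"
  shows "\<exists>N. \<forall>k\<ge>N. k * g \<in> T"
proof -
  obtain B where B: "b = B * g" using assms(5) by (metis dvd_def mult.commute)
  have "k * g \<in> T" if k: "B * B \<le> k" for k
  proof -
    \<comment> \<open>k g = (k mod B) (b + g) + (k div B - k mod B) b, where k mod B \<le> k div B as B * B \<le> k\<close>
    have "(k div B - k mod B + k mod B) * b = (k div B) * b"
    proof (cases "B = 0")
      case False
      have "B = B * B div B" using False by simp
      also have "\<dots> \<le> k div B" using k by (rule div_le_mono)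
      finally have "B \<le> k div B" .
      moreover have "k mod B < B" using False by simp
      ultimately have "k mod B \<le> k div B" by linarith
      then show ?thesis by simp
    qed (simp add: B)
    then have "(k mod B) * (b + g) + (k div B - k mod B) * b = (k div B) * b + (k mod B) * g"
      by (simp add: algebra_simps)
    also have "\<dots> = k * g" by (metis B add_mult_distrib div_mult_mod_eq mult.assoc)
    finally show "k * g \<in> T" using nat_submonoid_mult_mem[OF assms(1,2)] assms(2-4) by metis
  qed
  then show ?thesis by blast
qed

lemma add_closed_large_multiples_Gcd:
  fixes T :: "nat set"
  assumes add: "\<And>a b. a \<in> T \<Longrightarrow> b \<in> T \<Longrightarrow> a + b \<in> T" and "t \<in> T" "0 \<notin> T"
  shows "\<exists>N. \<forall>k\<ge>N. k * Gcd T \<in> T"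
proof -
  define T0 where "T0 = insert 0 T"
  have "0 \<in> T0" by (simp add: T0_def)
  have add0: "a + b \<in> T0" if "a \<in> T0" "b \<in> T0" for a b
    using that add by (auto simp: T0_def)
  define P where "P g \<longleftrightarrow> 0 < g \<and> (\<exists>b\<in>T0. b + g \<in> T0)" for g
  have "P t" using assms(2,3) by (auto simp: P_def T0_def intro: gr0I)
  define g where "g = (LEAST g. P g)"
  have "P g" unfolding g_def using \<open>P t\<close> by (rule LeastI)
  then obtain b where g: "0 < g" "b \<in> T0" "b + g \<in> T0" by (auto simp: P_def)
  have least: "g \<le> h" if "c \<in> T0" "c + h \<in> T0" "0 < h" for c h
    unfolding g_def by (rule Least_le) (use that in \<open>auto simp: P_def\<close>)
  have g_dvd: "g dvd a" if "a \<in> T0" for a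
    using nat_submonoid_least_gap_dvd[OF \<open>0 \<in> T0\<close> add0 g(2,3,1) least that] .
  have "g = Gcd T"
  proof (rule dvd_antisym)
    show "g dvd Gcd T" using g_dvd by (auto intro: Gcd_greatest simp: T0_def)
    have "Gcd T dvd b" "Gcd T dvd b + g" using g(2,3) by (auto simp: T0_def)
    then show "Gcd T dvd g" by (simp add: dvd_add_right_iff)
  qed
  obtain N where N: "\<forall>k\<ge>N. k * g \<in> T0"
    using nat_submonoid_large_multiples[OF \<open>0 \<in> T0\<close> add0 g(2,3) g_dvd[OF g(2)]] by blast
  have "k * Gcd T \<in> T" if "max N 1 \<le> k" for k
  proof -
    have "k * g \<in> T0" using N that by simp
    moreover have "k * g \<noteq> 0" using that g(1) by simp
    ultimately show ?thesis using \<open>g = Gcd T\<close> by (simp add: T0_def)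
  qed
  then show ?thesis by blast
qed

locale chain_component = compact_dynamical_system +
  fixes C :: "'a::metric_space set"
  assumes component: "C \<in> chain_components f"
begin

lemma C_nonempty: "C \<noteq> {}"
proof -
  obtain x where "x \<in> CR f" "C = {y \<in> CR f. chain_to f x y \<and> chain_to f y x}"
    using component unfolding chain_components_def by blast
  then have "x \<in> C" unfolding CR_def by simp
  then show ?thesis by blast
qed

lemma ex_dchain_UNIV: "u \<in> C \<Longrightarrow> w \<in> C \<Longrightarrow> \<delta> > 0 \<Longrightarrow> \<exists>k. dchain_from_to f UNIV \<delta> k u w"
  using chain_components_chain_to[OF component] unfolding chain_to_iff_dchain_from_to by blast

lemma image_in_C: "u \<in> C \<Longrightarrow> f u \<in> C"
  using chain_components_memI[OF component _ chain_to_step chain_to_image_self]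
    chain_components_chain_to[OF component] by blast

lemma C_closed: "closed C"
  unfolding closed_sequential_limits
proof (intro allI impI)
  fix c l assume "(\<forall>n. c n \<in> C) \<and> c \<longlonglongrightarrow> l"
  then have c: "\<And>n. c n \<in> C" "c \<longlonglongrightarrow> l" by auto
  have chains: "\<exists>k. dchain_from_to f UNIV (inverse (Suc n)) k (c 0) (c n)"
    "\<exists>k. dchain_from_to f UNIV (inverse (Suc n)) k (c n) (c 0)" for n
    using ex_dchain_UNIV c(1) by simp_all
  have "chain_to f (c 0) l" "chain_to f l (c 0)"
    by (rule chain_to_limit[OF chains(1) LIMSEQ_inverse_real_of_nat tendsto_const c(2)],
        rule chain_to_limit[OF chains(2) LIMSEQ_inverse_real_of_nat c(2) tendsto_const])
  then show "l \<in> C" using chain_components_memI[OF component c(1)] by blast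
qed

lemma C_compact: "compact C"
  using compact_Int_closed[OF compact_UNIV C_closed] by simp

lemma fine_chain_equivalent_near_C:
  assumes "u \<in> C" "\<eta> > 0"
  shows "\<exists>d>0. \<forall>z. (\<exists>k. dchain_from_to f UNIV d k u z) \<and> (\<exists>k. dchain_from_to f UNIV d k z u)
    \<longrightarrow> infdist z C < \<eta>"
proof (rule ccontr)
  assume contra: "\<not> ?thesis"
  have "\<exists>z. (\<exists>k. dchain_from_to f UNIV (inverse (Suc n)) k u z)
    \<and> (\<exists>k. dchain_from_to f UNIV (inverse (Suc n)) k z u) \<and> \<not> infdist z C < \<eta>" for n
  proof -
    have "inverse (real (Suc n)) > 0" by simp
    then show ?thesis using contra by blast
  qed
  then obtain z where z: "\<And>n. \<exists>k. dchain_from_to f UNIV (inverse (Suc n)) k u (z n)"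
    "\<And>n. \<exists>k. dchain_from_to f UNIV (inverse (Suc n)) k (z n) u" "\<And>n. \<not> infdist (z n) C < \<eta>"
    by metis
  obtain l r where r: "strict_mono r" "(z \<circ> r) \<longlonglongrightarrow> l"
    using compact_imp_seq_compact[OF compact_UNIV] by (metis UNIV_I seq_compactE)
  have d: "(\<lambda>n. inverse (real (Suc (r n)))) \<longlonglongrightarrow> 0"
    using LIMSEQ_subseq_LIMSEQ[OF LIMSEQ_inverse_real_of_nat r(1)] by (simp add: o_def)
  have "chain_to f u l" "chain_to f l u"
    by (rule chain_to_limit[OF z(1) d tendsto_const r(2)[unfolded o_def]],
        rule chain_to_limit[OF z(2) d r(2)[unfolded o_def] tendsto_const])
  then have "l \<in> C" by (rule chain_components_memI[OF component assms(1)])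
  have "eventually (\<lambda>n. dist ((z \<circ> r) n) l < \<eta>) sequentially" using tendstoD[OF r(2) assms(2)] .
  then obtain n where "dist (z (r n)) l < \<eta>" by (metis comp_apply eventually_sequentially order_refl)
  moreover have "infdist (z (r n)) C \<le> dist (z (r n)) l" using \<open>l \<in> C\<close> by (rule infdist_le)
  ultimately show False using z(3)[of "r n"] by linarith
qed

lemma fine_dchain_near_C:
  assumes "u \<in> C" "w \<in> C" "\<eta> > 0"
  obtains d where "0 < d"
    "\<And>\<xi> k i. dchain f d \<xi> k \<Longrightarrow> \<xi> 0 = u \<Longrightarrow> \<xi> k = w \<Longrightarrow> i \<le> k \<Longrightarrow> \<exists>c\<in>C. dist (\<xi> i) c < \<eta>"
proof -
  obtain d where "0 < d" and near: "\<And>z. \<exists>k. dchain_from_to f UNIV d k u z \<Longrightarrow>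
      \<exists>k. dchain_from_to f UNIV d k z u \<Longrightarrow> infdist z C < \<eta>"
    using fine_chain_equivalent_near_C[OF assms(1,3)] by blast
  obtain l where ret: "dchain_from_to f UNIV d l w u" using ex_dchain_UNIV[OF assms(2,1) \<open>0 < d\<close>] by blast
  have "\<exists>c\<in>C. dist (\<xi> i) c < \<eta>" if \<xi>: "dchain f d \<xi> k" "\<xi> 0 = u" "\<xi> k = w" and "i \<le> k" for \<xi> k i
  proof (cases "0 < i \<and> i < k")
    case True
    \<comment> \<open>an inner point of the chain is chain-equivalent to u at scale d\<close>
    then have "dchain_from_to f UNIV d i u (\<xi> i)" "dchain_from_to f UNIV d (k - i) (\<xi> i) w"
      using dchain_on_split[of f UNIV d \<xi> k i] \<xi> by auto
    then have "\<exists>k. dchain_from_to f UNIV d k u (\<xi> i)" "\<exists>k. dchain_from_to f UNIV d k (\<xi> i) u"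
      using dchain_from_to_trans[OF _ ret] by blast+
    then have "infdist (\<xi> i) C < \<eta>" by (rule near)
    then obtain c where "c \<in> C" "dist (\<xi> i) c < \<eta>" by (rule infdist_less_imp_dist_less[OF C_nonempty])
    then show ?thesis by blast
  next
    case False
    then have "i = 0 \<or> i = k" using \<open>i \<le> k\<close> by auto
    then have "\<xi> i \<in> C" using \<xi>(2,3) assms(1,2) by auto
    then show ?thesis using assms(3) by (intro bexI[of _ "\<xi> i"]) auto
  qed
  with \<open>0 < d\<close> show thesis by (rule that)
qed

lemma ex_dchain_within:
  assumes "u \<in> C" "w \<in> C" "\<delta> > 0"
  shows "\<exists>k. dchain_from_to f C \<delta> k u w"
proof -
  obtain \<eta> where \<eta>: "0 < \<eta>" "\<eta> \<le> \<delta>/3"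
    and robust: "\<And>\<xi> \<xi>' k. dchain f (\<delta>/3) \<xi> k \<Longrightarrow> \<forall>i\<le>k. dist (\<xi> i) (\<xi>' i) \<le> \<eta> \<Longrightarrow> dchain f \<delta> \<xi>' k"
    using dchain_robust[OF assms(3)] by blast
  obtain d0 where "0 < d0" and near: "\<And>\<xi> k i. dchain f d0 \<xi> k \<Longrightarrow> \<xi> 0 = u \<Longrightarrow> \<xi> k = w \<Longrightarrow> i \<le> k \<Longrightarrow>
      \<exists>c\<in>C. dist (\<xi> i) c < \<eta>"
    using fine_dchain_near_C[OF assms(1,2) \<eta>(1)] by blast
  define d where "d = min d0 (\<delta>/3)"
  have "0 < d" using \<open>0 < d0\<close> assms(3) by (simp add: d_def)
  obtain k \<xi> where \<xi>: "dchain f d \<xi> k" "\<xi> 0 = u" "\<xi> k = w"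
    using ex_dchain_UNIV[OF assms(1,2) \<open>0 < d\<close>] unfolding dchain_from_to_def by auto
  have "dchain f d0 \<xi> k" using \<xi>(1) by (rule dchain_mono) (simp add: d_def)
  then have "\<exists>c. c \<in> C \<and> dist (\<xi> i) c < \<eta>" if "i \<le> k" for i
    using near \<xi>(2,3) that by blast
  then obtain c where c: "\<And>i. i \<le> k \<Longrightarrow> c i \<in> C \<and> dist (\<xi> i) (c i) < \<eta>" by metis
  define \<xi>' where "\<xi>' i = (if 0 < i \<and> i < k then c i else \<xi> i)" for i
  have "dchain f \<delta> \<xi>' k"
  proof (rule robust)
    show "dchain f (\<delta>/3) \<xi> k" using \<xi>(1) by (rule dchain_mono) (simp add: d_def)
    show "\<forall>i\<le>k. dist (\<xi> i) (\<xi>' i) \<le> \<eta>" using c \<eta>(1) by (auto simp: \<xi>'_def less_imp_le)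
  qed
  moreover have "\<forall>i\<le>k. \<xi>' i \<in> C" using c \<xi>(2,3) assms(1,2) by (auto simp: \<xi>'_def)
  moreover have "\<xi>' 0 = u" "\<xi>' k = w" using \<xi>(2,3) by (auto simp: \<xi>'_def)
  ultimately show ?thesis unfolding dchain_from_to_def dchain_on_def by blast
qed

lemma dchain_from_to_bounded_length:
  assumes "\<delta> > 0"
  shows "\<exists>M. \<forall>u\<in>C. \<forall>w\<in>C. \<exists>k\<le>M. dchain_from_to f C \<delta> k u w"
proof -
  obtain \<eta> where "0 < \<eta>" "\<eta> \<le> \<delta>/3"
    and robust: "\<And>C k u w u' w'. dchain_from_to f C (\<delta>/3) k u w \<Longrightarrow> dist u u' \<le> \<eta> \<Longrightarrow>
      dist w w' \<le> \<eta> \<Longrightarrow> u' \<in> C \<Longrightarrow> w' \<in> C \<Longrightarrow> dchain_from_to f C \<delta> k u' w'"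
    using dchain_from_to_robust[OF assms] by blast
  obtain K where K: "finite K" "K \<subseteq> C" "C \<subseteq> (\<Union>p\<in>K. ball p \<eta>)"
    using seq_compact_imp_totally_bounded[OF compact_imp_seq_compact[OF C_compact], rule_format, OF \<open>0 < \<eta>\<close>]
    by metis
  define len where "len p q = (SOME k. dchain_from_to f C (\<delta>/3) k p q)" for p q
  have len: "dchain_from_to f C (\<delta>/3) (len p q) p q" if "p \<in> K" "q \<in> K" for p q
  proof -
    have "p \<in> C" "q \<in> C" "\<delta>/3 > 0" using that K(2) assms by auto
    then have "\<exists>k. dchain_from_to f C (\<delta>/3) k p q" by (rule ex_dchain_within)
    then show ?thesis unfolding len_def by (rule someI_ex)
  qed
  define M where "M = Max ((\<lambda>(p, q). len p q) ` (K \<times> K))"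
  have "\<exists>k\<le>M. dchain_from_to f C \<delta> k u w" if uw: "u \<in> C" "w \<in> C" for u w
  proof -
    have "u \<in> (\<Union>p\<in>K. ball p \<eta>)" "w \<in> (\<Union>p\<in>K. ball p \<eta>)" using subsetD[OF K(3)] uw by blast+
    then obtain p q where pq: "p \<in> K" "q \<in> K" "dist p u < \<eta>" "dist q w < \<eta>" by auto
    have "dchain_from_to f C \<delta> (len p q) u w"
      using len[OF pq(1,2)] by (rule robust) (use pq uw in auto)
    moreover have "len p q \<le> M" unfolding M_def using K(1) pq by (intro Max_ge) auto
    ultimately show ?thesis by blast
  qed
  then show ?thesis by blast
qed

lemma period_pos:
  assumes "\<delta> > 0"
  shows "0 < period f C \<delta>"
proof -
  obtain u where "u \<in> C" using C_nonempty by blast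
  then obtain k where k: "dchain_from_to f C \<delta> k u u" using ex_dchain_within assms by blast
  then have "period f C \<delta> dvd k" by (rule period_dvd)
  then show ?thesis using dchain_from_to_pos[OF k] by (auto intro: gr0I)
qed

lemma period_dvd_return_length:
  assumes "\<delta> > 0" "sim_delta f C \<delta> u w" "dchain_from_to f C \<delta> l w u"
  shows "period f C \<delta> dvd l"
proof -
  obtain k where k: "dchain_from_to f C \<delta> k u w" "period f C \<delta> dvd k"
    using assms(2) unfolding sim_delta_iff by blast
  have "period f C \<delta> dvd k + l" by (rule period_dvd[OF dchain_from_to_trans[OF k(1) assms(3)]])
  then show ?thesis using k(2) by (simp add: dvd_add_right_iff)
qed

lemma period_dvd_sim_delta_length:
  assumes "\<delta> > 0" "sim_delta f C \<delta> u w" "dchain_from_to f C \<delta> k u w"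
  shows "period f C \<delta> dvd k"
proof -
  obtain l where ret: "dchain_from_to f C \<delta> l w u"
    using assms(1,2) ex_dchain_within unfolding sim_delta_iff by blast
  then have "period f C \<delta> dvd l" by (rule period_dvd_return_length[OF assms(1,2)])
  then show ?thesis using period_dvd[OF dchain_from_to_trans[OF assms(3) ret]] by (simp add: dvd_add_left_iff)
qed

lemma sim_delta_refl:
  assumes "\<delta> > 0" "u \<in> C"
  shows "sim_delta f C \<delta> u u"
proof -
  obtain k where "dchain_from_to f C \<delta> k u u" using ex_dchain_within assms by blast
  then show ?thesis using period_dvd assms(2) unfolding sim_delta_iff by blast
qed

lemma sim_delta_sym:
  assumes "\<delta> > 0" "sim_delta f C \<delta> u w"
  shows "sim_delta f C \<delta> w u"
proof -
  obtain l where "dchain_from_to f C \<delta> l w u"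
    using assms ex_dchain_within unfolding sim_delta_iff by blast
  then show ?thesis using period_dvd_return_length[OF assms] assms(2) unfolding sim_delta_iff by blast
qed

lemma sim_delta_image:
  assumes "\<delta> > 0" "sim_delta f C \<delta> u w"
  shows "sim_delta f C \<delta> (f u) (f w)"
proof -
  have C: "u \<in> C" "w \<in> C" using assms(2) unfolding sim_delta_iff by auto
  obtain k where k: "dchain_from_to f C \<delta> k u w" "period f C \<delta> dvd k"
    using assms(2) unfolding sim_delta_iff by blast
  have step: "dchain_from_to f C \<delta> 1 u (f u)" "dchain_from_to f C \<delta> 1 w (f w)"
    using dchain_from_to_orbit[of C f _ 1 \<delta>] image_in_C C assms(1) by auto
  obtain l where l: "dchain_from_to f C \<delta> l (f u) u" using ex_dchain_within image_in_C C assms(1) by blast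
  have "period f C \<delta> dvd 1 + l" by (rule period_dvd[OF dchain_from_to_trans[OF step(1) l]])
  then have "period f C \<delta> dvd l + k + 1" using k(2) by (metis add.commute add.left_commute dvd_add)
  moreover have "dchain_from_to f C \<delta> (l + k + 1) (f u) (f w)"
    using dchain_from_to_trans[OF dchain_from_to_trans[OF l k(1)] step(2)] .
  ultimately show ?thesis using image_in_C C unfolding sim_delta_iff by blast
qed

lemma sim_delta_funpow: "\<delta> > 0 \<Longrightarrow> sim_delta f C \<delta> u w \<Longrightarrow> sim_delta f C \<delta> ((f ^^ i) u) ((f ^^ i) w)"
  by (induction i) (auto intro: sim_delta_image)

lemma sim_delta_funpow_period:
  assumes "\<delta> > 0" "u \<in> C" "period f C \<delta> dvd L"
  shows "sim_delta f C \<delta> u ((f ^^ L) u)"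
proof (cases "L = 0")
  case True
  then show ?thesis using sim_delta_refl assms by simp
next
  case False
  then have "dchain_from_to f C \<delta> L u ((f ^^ L) u)"
    using dchain_from_to_orbit[of C f u L \<delta>] image_in_C assms(1,2) by simp
  then show ?thesis using assms(3) dchain_from_to_mem unfolding sim_delta_iff by blast
qed

lemma D_delta_eq:
  assumes "D \<in> Dclasses f C"
  obtains x0 where "x0 \<in> C" "\<And>\<delta>. \<delta> > 0 \<Longrightarrow> D_delta f C \<delta> D = {y. sim_delta f C \<delta> x0 y}"
proof -
  obtain x0 where x0: "x0 \<in> C" "D = {y. sim_C f C x0 y}" using assms unfolding Dclasses_def by blast
  have "D_delta f C \<delta> D = {y. sim_delta f C \<delta> x0 y}" if "\<delta> > 0" for \<delta>
    unfolding D_delta_def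
  proof (rule the_equality)
    show "{y. sim_delta f C \<delta> x0 y} \<in> Dclasses_delta f C \<delta> \<and> D \<subseteq> {y. sim_delta f C \<delta> x0 y}"
      using x0 \<open>\<delta> > 0\<close> unfolding Dclasses_delta_def sim_C_def by blast
  next
    fix E assume E: "E \<in> Dclasses_delta f C \<delta> \<and> D \<subseteq> E"
    then obtain x where E_eq: "E = {y. sim_delta f C \<delta> x y}" unfolding Dclasses_delta_def by blast
    have "x0 \<in> D" using x0 sim_delta_refl unfolding sim_C_def by simp
    then have "sim_delta f C \<delta> x x0" using E E_eq by blast
    then show "E = {y. sim_delta f C \<delta> x0 y}"
      using sim_delta_sym[OF \<open>\<delta> > 0\<close>] sim_delta_trans unfolding E_eq by blast
  qed
  with x0(1) show thesis by (rule that)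
qed

lemma cycle_lengths_large:
  assumes "\<delta> > 0" "x0 \<in> C"
  shows "\<exists>N. \<forall>k\<ge>N. dchain_from_to f C \<delta> (k * period f C \<delta>) x0 x0"
proof -
  define T where "T = {k. dchain_from_to f C \<delta> k x0 x0}"
  have add: "a + b \<in> T" if "a \<in> T" "b \<in> T" for a b
    using that dchain_from_to_trans unfolding T_def by blast
  obtain t where "t \<in> T" using ex_dchain_within[OF assms(2,2,1)] unfolding T_def by blast
  have "0 \<notin> T" using dchain_from_to_pos unfolding T_def by fastforce
  have "Gcd T = period f C \<delta>"
  proof (rule dvd_antisym)
    show "period f C \<delta> dvd Gcd T" by (rule Gcd_greatest) (simp add: T_def period_dvd)
    show "Gcd T dvd period f C \<delta>" unfolding period_def
    proof (rule Gcd_greatest)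
      fix c assume "c \<in> {k. \<exists>\<xi>. dchain_on f C \<delta> \<xi> k \<and> \<xi> 0 = \<xi> k}"
      then obtain v where cyc: "dchain_from_to f C \<delta> c v v" unfolding dchain_from_to_def by auto
      then have "v \<in> C" using dchain_from_to_mem by blast
      obtain t1 where t1: "dchain_from_to f C \<delta> t1 x0 v" using ex_dchain_within assms \<open>v \<in> C\<close> by blast
      obtain t2 where t2: "dchain_from_to f C \<delta> t2 v x0" using ex_dchain_within assms \<open>v \<in> C\<close> by blast
      have "t1 + t2 \<in> T" "t1 + c + t2 \<in> T"
        using dchain_from_to_trans[OF t1 t2] dchain_from_to_trans[OF dchain_from_to_trans[OF t1 cyc] t2]
        unfolding T_def by simp_all
      then have "Gcd T dvd t1 + t2" "Gcd T dvd (t1 + t2) + c" by (simp_all add: Gcd_dvd ac_simps)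
      then show "Gcd T dvd c" by (simp add: dvd_add_right_iff)
    qed
  qed
  then show ?thesis using add_closed_large_multiples_Gcd[OF add \<open>t \<in> T\<close> \<open>0 \<notin> T\<close>] unfolding T_def by simp
qed

lemma sim_delta_long_chains:
  assumes "\<delta> > 0"
  shows "\<exists>N. \<forall>k\<ge>N. \<forall>u w. sim_delta f C \<delta> u w \<longrightarrow> dchain_from_to f C \<delta> (k * period f C \<delta>) u w"
proof -
  obtain x0 where "x0 \<in> C" using C_nonempty by blast
  define m where "m = period f C \<delta>"
  have "0 < m" using period_pos assms by (simp add: m_def)
  obtain N0 where N0: "\<And>k. N0 \<le> k \<Longrightarrow> dchain_from_to f C \<delta> (k * m) x0 x0"
    using cycle_lengths_large[OF assms \<open>x0 \<in> C\<close>] by (auto simp: m_def)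
  obtain M where M: "\<And>u w. u \<in> C \<Longrightarrow> w \<in> C \<Longrightarrow> \<exists>k\<le>M. dchain_from_to f C \<delta> k u w"
    using dchain_from_to_bounded_length[OF assms] by blast
  \<comment> \<open>go from u to x0, wind around x0, then go on to w\<close>
  have "dchain_from_to f C \<delta> (k * m) u w" if k: "N0 + 2 * M \<le> k" and uw: "sim_delta f C \<delta> u w" for k u w
  proof -
    have "u \<in> C" "w \<in> C" using uw unfolding sim_delta_iff by auto
    then obtain a1 a2 where a: "a1 \<le> M" "a2 \<le> M"
      "dchain_from_to f C \<delta> a1 u x0" "dchain_from_to f C \<delta> a2 x0 w"
      using M \<open>x0 \<in> C\<close> by metis
    have "m dvd a1 + a2"
      using period_dvd_sim_delta_length[OF assms uw dchain_from_to_trans[OF a(3,4)]] by (simp add: m_def)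
    then obtain s where s: "a1 + a2 = s * m" by (metis dvd_def mult.commute)
    have "s \<le> s * m" using \<open>0 < m\<close> by simp
    then have "s \<le> 2 * M" using s a(1,2) by linarith
    then have "N0 \<le> k - s" using k by linarith
    then have "dchain_from_to f C \<delta> (a1 + (k - s) * m + a2) u w"
      using N0 dchain_from_to_trans a(3,4) by blast
    moreover have "(k - s) * m + s * m = k * m"
      using \<open>s \<le> 2 * M\<close> k by (metis add_mult_distrib le_add_diff_inverse2 le_add2 order_trans)
    then have "a1 + (k - s) * m + a2 = k * m" using s by linarith
    ultimately show ?thesis by simp
  qed
  then show ?thesis unfolding m_def by blast
qed

lemma sim_delta_iterates_long_chains:
  assumes "\<delta> > 0"
  shows "\<exists>L. \<forall>i p q. sim_delta f C \<delta> p q \<longrightarrow> dchain_from_to f C \<delta> L ((f ^^ i) p) ((f ^^ (i + L)) q)"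
proof -
  obtain N where long: "\<forall>k\<ge>N. \<forall>u w. sim_delta f C \<delta> u w \<longrightarrow> dchain_from_to f C \<delta> (k * period f C \<delta>) u w"
    using sim_delta_long_chains[OF assms] by blast
  define L where "L = N * period f C \<delta>"
  have "dchain_from_to f C \<delta> L ((f ^^ i) p) ((f ^^ (i + L)) q)" if "sim_delta f C \<delta> p q" for i p q
  proof -
    have s1: "sim_delta f C \<delta> ((f ^^ i) p) ((f ^^ i) q)" using sim_delta_funpow[OF assms that] .
    then have "(f ^^ i) q \<in> C" unfolding sim_delta_iff by blast
    then have s2: "sim_delta f C \<delta> ((f ^^ i) q) ((f ^^ L) ((f ^^ i) q))"
      using sim_delta_funpow_period[OF assms] by (simp add: L_def)
    have "(f ^^ L) ((f ^^ i) q) = (f ^^ (i + L)) q" by (metis add.commute comp_apply funpow_add)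
    then have "sim_delta f C \<delta> ((f ^^ i) p) ((f ^^ (i + L)) q)" using sim_delta_trans[OF s1 s2] by simp
    then show ?thesis unfolding L_def by (rule long[rule_format, OF order_refl])
  qed
  then show ?thesis by blast
qed

end

section \<open>Stable sets, s-limit shadowing and scrambled tuples\<close>

lemma dchain_join_orbits:
  assumes "dchain_from_to f UNIV \<delta> L ((f ^^ i) y) ((f ^^ (i + L)) a)" "0 \<le> \<delta>"
  shows "\<exists>\<xi>. \<xi> 0 = y \<and> (\<forall>s. dist (f (\<xi> s)) (\<xi> (Suc s)) \<le> \<delta>) \<and> (\<forall>s\<ge>i + L. \<xi> s = (f ^^ s) a)"
proof -
  obtain \<zeta> where \<zeta>: "dchain f \<delta> \<zeta> L" "\<zeta> 0 = (f ^^ i) y" "\<zeta> L = (f ^^ (i + L)) a"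
    using assms(1) unfolding dchain_from_to_def by auto
  have "1 \<le> L" using \<zeta>(1) unfolding dchain_def by blast
  define \<xi> where "\<xi> s = (if s \<le> i then (f ^^ s) y else if s \<le> i + L then \<zeta> (s - i) else (f ^^ s) a)" for s
  have tail: "\<xi> s = (f ^^ s) a" if "i + L \<le> s" for s
    using that \<zeta>(3) \<open>1 \<le> L\<close> by (auto simp: \<xi>_def)
  have step: "dist (f (\<xi> s)) (\<xi> (Suc s)) \<le> \<delta>" for s
  proof -
    consider "s < i" | "i \<le> s" "s < i + L" | "i + L \<le> s" by linarith
    then show ?thesis
    proof cases
      case 1
      then show ?thesis using assms(2) by (simp add: \<xi>_def)
    next
      case 2
      then have "\<xi> s = \<zeta> (s - i)" "\<xi> (Suc s) = \<zeta> (Suc (s - i))" using \<zeta>(2) by (auto simp: \<xi>_def Suc_diff_le)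
      then show ?thesis using \<zeta>(1) 2 unfolding dchain_def by simp
    next
      case 3
      then show ?thesis using tail[of s] tail[of "Suc s"] assms(2) by simp
    qed
  qed
  have "\<xi> 0 = y" by (simp add: \<xi>_def)
  with step tail show ?thesis by blast
qed

lemma s_limit_shadowing_join:
  assumes "s_limit_shadowing f" "\<epsilon> > 0"
  obtains \<delta> where "\<delta> > 0"
    "\<And>y a i L. dchain_from_to f UNIV \<delta> L ((f ^^ i) y) ((f ^^ (i + L)) a) \<Longrightarrow>
       \<exists>x. dist x y \<le> \<epsilon> \<and> (\<lambda>s. dist ((f ^^ s) x) ((f ^^ s) a)) \<longlonglongrightarrow> 0"
proof -
  obtain \<delta> where "\<delta> > 0" and shadow: "\<And>\<xi>. (\<forall>i. dist (f (\<xi> i)) (\<xi> (Suc i)) \<le> \<delta>) \<and>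
      (\<lambda>i. dist (f (\<xi> i)) (\<xi> (Suc i))) \<longlonglongrightarrow> 0 \<longrightarrow>
      (\<exists>x. (\<forall>i. dist ((f ^^ i) x) (\<xi> i) \<le> \<epsilon>) \<and> (\<lambda>i. dist ((f ^^ i) x) (\<xi> i)) \<longlonglongrightarrow> 0)"
    using assms unfolding s_limit_shadowing_def by blast
  have "\<exists>x. dist x y \<le> \<epsilon> \<and> (\<lambda>s. dist ((f ^^ s) x) ((f ^^ s) a)) \<longlonglongrightarrow> 0"
    if ch: "dchain_from_to f UNIV \<delta> L ((f ^^ i) y) ((f ^^ (i + L)) a)" for y a i L
  proof -
    obtain \<xi> where \<xi>: "\<xi> 0 = y" "\<And>s. dist (f (\<xi> s)) (\<xi> (Suc s)) \<le> \<delta>"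
      "\<And>s. i + L \<le> s \<Longrightarrow> \<xi> s = (f ^^ s) a"
      using dchain_join_orbits[OF ch less_imp_le[OF \<open>\<delta> > 0\<close>]] by blast
    have "(\<lambda>s. dist (f (\<xi> s)) (\<xi> (Suc s))) \<longlonglongrightarrow> 0"
      by (rule tendsto_eventually) (auto simp: eventually_sequentially \<xi>(3) intro!: exI[of _ "i + L"])
    then obtain x where x: "\<forall>s. dist ((f ^^ s) x) (\<xi> s) \<le> \<epsilon>" "(\<lambda>s. dist ((f ^^ s) x) (\<xi> s)) \<longlonglongrightarrow> 0"
      using shadow \<xi>(2) by blast
    have "dist x y \<le> \<epsilon>" using x(1)[rule_format, of 0] \<xi>(1) by simp
    moreover have "(\<lambda>s. dist ((f ^^ s) x) ((f ^^ s) a)) \<longlonglongrightarrow> 0"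
      using x(2) by (rule Lim_transform_eventually)
        (auto simp: eventually_sequentially \<xi>(3) intro!: exI[of _ "i + L"])
    ultimately show ?thesis by blast
  qed
  with \<open>\<delta> > 0\<close> show thesis by (rule that)
qed

lemma mem_Vs_iff:
  "x \<in> Vs f C D \<longleftrightarrow> x \<in> Ws f C \<and> (\<forall>\<delta>>0. (\<lambda>i. infdist ((f ^^ i) x) ((f ^^ i) ` D_delta f C \<delta> D)) \<longlonglongrightarrow> 0)"
  unfolding Vs_def by (auto dest: spec[where x = 1])

lemma infdist_tendsto_0_asymptotic:
  assumes "(\<lambda>i. infdist (a i) (A i)) \<longlonglongrightarrow> 0" "(\<lambda>i. dist (x i) (a i)) \<longlonglongrightarrow> 0"
  shows "(\<lambda>i. infdist (x i) (A i)) \<longlonglongrightarrow> 0"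
proof (rule tendsto_sandwich[OF _ _ tendsto_const tendsto_add_zero[OF assms]])
  show "eventually (\<lambda>i. 0 \<le> infdist (x i) (A i)) sequentially" by (simp add: infdist_nonneg)
  show "eventually (\<lambda>i. infdist (x i) (A i) \<le> infdist (a i) (A i) + dist (x i) (a i)) sequentially"
    by (simp add: infdist_triangle)
qed

lemma Vs_asymptotic:
  assumes "a \<in> Vs f C D" "(\<lambda>i. dist ((f ^^ i) x) ((f ^^ i) a)) \<longlonglongrightarrow> 0"
  shows "x \<in> Vs f C D"
  using assms infdist_tendsto_0_asymptotic[OF _ assms(2)] unfolding mem_Vs_iff Ws_def by simp

lemma Vs_eventually_near_class:
  assumes "y \<in> Vs f C D" "\<delta> > 0" "\<eta> > 0" "D_delta f C \<delta> D \<noteq> {}"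
  shows "eventually (\<lambda>i. \<exists>p\<in>D_delta f C \<delta> D. dist ((f ^^ i) y) ((f ^^ i) p) < \<eta>) sequentially"
proof -
  have "(\<lambda>i. infdist ((f ^^ i) y) ((f ^^ i) ` D_delta f C \<delta> D)) \<longlonglongrightarrow> 0"
    using assms(1,2) unfolding mem_Vs_iff by blast
  then have "eventually (\<lambda>i. infdist ((f ^^ i) y) ((f ^^ i) ` D_delta f C \<delta> D) < \<eta>) sequentially"
    using assms(3) by (rule order_tendstoD(2))
  then show ?thesis
  proof eventually_elim
    case (elim i)
    have "(f ^^ i) ` D_delta f C \<delta> D \<noteq> {}" using assms(4) by simp
    then obtain z where "z \<in> (f ^^ i) ` D_delta f C \<delta> D" "dist ((f ^^ i) y) z < \<eta>"
      using elim by (rule infdist_less_imp_dist_less)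
    then show ?case by blast
  qed
qed

lemma Vs_near_class_at_shifted_times:
  assumes "y \<in> Vs f C D" "a \<in> Vs f C D" "\<delta> > 0" "\<eta> > 0" "D_delta f C \<delta> D \<noteq> {}"
  shows "\<exists>i. (\<exists>p\<in>D_delta f C \<delta> D. dist ((f ^^ i) y) ((f ^^ i) p) < \<eta>) \<and>
    (\<exists>q\<in>D_delta f C \<delta> D. dist ((f ^^ (i + L)) a) ((f ^^ (i + L)) q) < \<eta>)"
proof -
  have "eventually (\<lambda>i. \<exists>p\<in>D_delta f C \<delta> D. dist ((f ^^ i) y) ((f ^^ i) p) < \<eta>) sequentially"
    using Vs_eventually_near_class[OF assms(1,3-5)] .
  moreover have "eventually (\<lambda>i. \<exists>q\<in>D_delta f C \<delta> D. dist ((f ^^ (i + L)) a) ((f ^^ (i + L)) q) < \<eta>)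
      sequentially"
    using Vs_eventually_near_class[OF assms(2-5)]
      eventually_sequentially_seg[where k = L and
        P = "\<lambda>i. \<exists>q\<in>D_delta f C \<delta> D. dist ((f ^^ i) a) ((f ^^ i) q) < \<eta>"] by simp
  ultimately have "eventually (\<lambda>i. (\<exists>p\<in>D_delta f C \<delta> D. dist ((f ^^ i) y) ((f ^^ i) p) < \<eta>) \<and>
      (\<exists>q\<in>D_delta f C \<delta> D. dist ((f ^^ (i + L)) a) ((f ^^ (i + L)) q) < \<eta>)) sequentially"
    by (rule eventually_conj)
  then show ?thesis by (rule eventually_happens'[OF sequentially_bot])
qed

lemma dist_pair_close:
  assumes "dist x a < e" "dist y b < e"
  shows "dist a b - 2 * e < dist x y" "dist x y < dist a b + 2 * e"
  using assms dist_triangle[of a b x] dist_triangle[of x b y] dist_triangle[of x y a] dist_triangle[of a y b]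
  by (simp_all add: dist_commute)

lemma full_family_eventually_superset:
  assumes "full_family \<F>" "A \<in> \<F>" "eventually (\<lambda>i. i \<in> A \<longrightarrow> i \<in> B) sequentially"
  shows "B \<in> \<F>"
proof -
  obtain N where "\<forall>i\<ge>N. i \<in> A \<longrightarrow> i \<in> B" using assms(3) by (auto simp: eventually_sequentially)
  then have "{i \<in> A. i \<ge> N} \<subseteq> B" by auto
  moreover have "{i \<in> A. i \<ge> N} \<in> \<F>" using assms(1,2) unfolding full_family_def by blast
  ultimately show ?thesis using assms(1) unfolding full_family_def furstenberg_family_def by blast
qed

lemma S_set_close:
  assumes "\<forall>j\<in>{..<n}. dist ((f ^^ i) (x j)) ((f ^^ i) (a j)) < e" "i \<in> S_set f n a \<delta>" "r + 2 * e \<le> \<delta>"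
  shows "i \<in> S_set f n x r"
  unfolding S_set_def
proof (intro CollectI allI impI)
  fix j k assume jk: "j < k \<and> k < n"
  then have "\<delta> < dist ((f ^^ i) (a j)) ((f ^^ i) (a k))" using assms(2) unfolding S_set_def by blast
  moreover have "dist ((f ^^ i) (a j)) ((f ^^ i) (a k)) - 2 * e < dist ((f ^^ i) (x j)) ((f ^^ i) (x k))"
    using assms(1) jk by (intro dist_pair_close(1)) auto
  ultimately show "r < dist ((f ^^ i) (x j)) ((f ^^ i) (x k))" using assms(3) by linarith
qed

lemma T_set_close:
  assumes "\<forall>j\<in>{..<n}. dist ((f ^^ i) (x j)) ((f ^^ i) (a j)) < e" "i \<in> T_set f n a r" "r + 2 * e \<le> r'"
  shows "i \<in> T_set f n x r'"
  unfolding T_set_def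
proof (intro CollectI allI impI)
  fix j k assume jk: "j < k \<and> k < n"
  then have "dist ((f ^^ i) (a j)) ((f ^^ i) (a k)) < r" using assms(2) unfolding T_set_def by blast
  moreover have "dist ((f ^^ i) (x j)) ((f ^^ i) (x k)) < dist ((f ^^ i) (a j)) ((f ^^ i) (a k)) + 2 * e"
    using assms(1) jk by (intro dist_pair_close(2)) auto
  ultimately show "dist ((f ^^ i) (x j)) ((f ^^ i) (x k)) < r'" using assms(3) by linarith
qed

lemma scrambled_asymptotic:
  assumes "full_family \<F>" "full_family \<G>" "scrambled f \<F> \<G> n \<delta> a" "r < \<delta>"
    and asym: "\<And>j. j < n \<Longrightarrow> (\<lambda>i. dist ((f ^^ i) (x j)) ((f ^^ i) (a j))) \<longlonglongrightarrow> 0"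
  shows "scrambled f \<F> \<G> n r x"
proof -
  have close: "eventually (\<lambda>i. \<forall>j\<in>{..<n}. dist ((f ^^ i) (x j)) ((f ^^ i) (a j)) < e) sequentially"
    if "e > 0" for e
    using order_tendstoD(2)[OF asym that] by (intro eventually_ball_finite) auto
  have "(\<delta> - r)/2 > 0" using assms(4) by simp
  from close[OF this] have "eventually (\<lambda>i. i \<in> S_set f n a \<delta> \<longrightarrow> i \<in> S_set f n x r) sequentially"
  proof eventually_elim
    case (elim i)
    have "r + 2 * ((\<delta> - r)/2) \<le> \<delta>" by (simp add: field_simps)
    with elim show ?case by (blast intro: S_set_close)
  qed
  then have "S_set f n x r \<in> \<F>"
    using full_family_eventually_superset[OF assms(1)] assms(3) unfolding scrambled_def by blast
  moreover have "T_set f n x e \<in> \<G>" if "e > 0" for e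
  proof -
    have "e/4 > 0" using that by simp
    from close[OF this] have "eventually (\<lambda>i. i \<in> T_set f n a (e/2) \<longrightarrow> i \<in> T_set f n x e) sequentially"
    proof eventually_elim
      case (elim i)
      have "e/2 + 2 * (e/4) \<le> e" by (simp add: field_simps)
      with elim show ?case by (blast intro: T_set_close)
    qed
    moreover have "T_set f n a (e/2) \<in> \<G>" using assms(3) half_gt_zero[OF that] unfolding scrambled_def by blast
    ultimately show ?thesis using full_family_eventually_superset[OF assms(2)] by blast
  qed
  ultimately show ?thesis unfolding scrambled_def by blast
qed

context chain_component
begin

lemma Vs_point_near_asymptotic:
  assumes "s_limit_shadowing f" "D \<in> Dclasses f C" "y \<in> Vs f C D" "a \<in> Vs f C D" "\<epsilon> > 0"
  shows "\<exists>x. dist x y < \<epsilon> \<and> (\<lambda>i. dist ((f ^^ i) x) ((f ^^ i) a)) \<longlonglongrightarrow> 0"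
proof -
  obtain \<delta> where "\<delta> > 0" and join: "\<And>y a i L. dchain_from_to f UNIV \<delta> L ((f ^^ i) y) ((f ^^ (i + L)) a) \<Longrightarrow>
      \<exists>x. dist x y \<le> \<epsilon>/2 \<and> (\<lambda>s. dist ((f ^^ s) x) ((f ^^ s) a)) \<longlonglongrightarrow> 0"
    using s_limit_shadowing_join[OF assms(1), of "\<epsilon>/2"] assms(5) by auto
  obtain \<eta> where \<eta>: "0 < \<eta>" "\<eta> \<le> \<delta>/3"
    and robust: "\<And>C k u w u' w'. dchain_from_to f C (\<delta>/3) k u w \<Longrightarrow> dist u u' \<le> \<eta> \<Longrightarrow>
      dist w w' \<le> \<eta> \<Longrightarrow> u' \<in> C \<Longrightarrow> w' \<in> C \<Longrightarrow> dchain_from_to f C \<delta> k u' w'"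
    using dchain_from_to_robust[OF \<open>\<delta> > 0\<close>] by blast
  define \<beta> where "\<beta> = \<delta>/3"
  have "\<beta> > 0" using \<open>\<delta> > 0\<close> by (simp add: \<beta>_def)
  obtain x0 where "x0 \<in> C" and E: "D_delta f C \<beta> D = {z. sim_delta f C \<beta> x0 z}"
    using D_delta_eq[OF assms(2)] \<open>\<beta> > 0\<close> by metis
  have "D_delta f C \<beta> D \<noteq> {}" using E sim_delta_refl[OF \<open>\<beta> > 0\<close> \<open>x0 \<in> C\<close>] by blast
  obtain L where long: "\<And>i p q. sim_delta f C \<beta> p q \<Longrightarrow> dchain_from_to f C \<beta> L ((f ^^ i) p) ((f ^^ (i + L)) q)"
    using sim_delta_iterates_long_chains[OF \<open>\<beta> > 0\<close>] by blast
  obtain i p q where pq: "p \<in> D_delta f C \<beta> D" "q \<in> D_delta f C \<beta> D"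
    "dist ((f ^^ i) y) ((f ^^ i) p) < \<eta>" "dist ((f ^^ (i + L)) a) ((f ^^ (i + L)) q) < \<eta>"
    using Vs_near_class_at_shifted_times[OF assms(3,4) \<open>\<beta> > 0\<close> \<eta>(1) \<open>D_delta f C \<beta> D \<noteq> {}\<close>] by blast
  have "sim_delta f C \<beta> p q" using pq(1,2) E sim_delta_sym[OF \<open>\<beta> > 0\<close>] sim_delta_trans by blast
  then have "dchain_from_to f C \<beta> L ((f ^^ i) p) ((f ^^ (i + L)) q)" by (rule long)
  then have "dchain_from_to f UNIV (\<delta>/3) L ((f ^^ i) p) ((f ^^ (i + L)) q)"
    by (rule dchain_from_to_mono) (simp_all add: \<beta>_def)
  then have "dchain_from_to f UNIV \<delta> L ((f ^^ i) y) ((f ^^ (i + L)) a)"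
    by (rule robust) (use pq(3,4) in \<open>simp_all add: dist_commute\<close>)
  then obtain x where "dist x y \<le> \<epsilon>/2" "(\<lambda>s. dist ((f ^^ s) x) ((f ^^ s) a)) \<longlonglongrightarrow> 0"
    using join by blast
  then show ?thesis using assms(5) by (intro exI[of _ x]) simp
qed

end

theorem theorem1p2:
  fixes f :: "'a::metric_space \<Rightarrow> 'a"
    and C D :: "'a set" and \<F> \<G> :: "nat set set" and n :: nat and \<delta> :: real
    and a :: "nat \<Rightarrow> 'a"
  assumes "compact (UNIV :: 'a set)"
    and "continuous_on UNIV f"
    and "s_limit_shadowing f"
    and "C \<in> chain_components f"
    and "D \<in> Dclasses f C"
    and "full_family \<F>" and "full_family \<G>"
    and "n \<ge> 2" and "\<delta> > 0"
    and "\<forall>j<n. a j \<in> Vs f C D"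
    and "scrambled f \<F> \<G> n \<delta> a"
  shows "\<forall>r. 0 < r \<and> r < \<delta> \<longrightarrow> dense_chaotic f \<F> \<G> n r (Vs f C D)"
proof (intro allI impI)
  fix r assume r: "0 < r \<and> r < \<delta>"
  interpret chain_component f C using assms(1,2,4) by unfold_locales
  have "0 < n" using assms(8) by simp
  then have "Vs f C D \<noteq> {}" using assms(10) by blast
  moreover have "\<exists>x. (\<forall>j<n. x j \<in> Vs f C D \<and> dist (x j) (y j) < \<epsilon>) \<and> scrambled f \<F> \<G> n r x"
    if y: "\<forall>j<n. y j \<in> Vs f C D" and "\<epsilon> > 0" for y \<epsilon>
  proof -
    have "\<forall>j. \<exists>x. j < n \<longrightarrow> dist x (y j) < \<epsilon> \<and> (\<lambda>i. dist ((f ^^ i) x) ((f ^^ i) (a j))) \<longlonglongrightarrow> 0"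
      using Vs_point_near_asymptotic[OF assms(3,5)] y assms(10) \<open>\<epsilon> > 0\<close> by blast
    then obtain x where x: "\<And>j. j < n \<Longrightarrow> dist (x j) (y j) < \<epsilon>"
      "\<And>j. j < n \<Longrightarrow> (\<lambda>i. dist ((f ^^ i) (x j)) ((f ^^ i) (a j))) \<longlonglongrightarrow> 0"
      by metis
    have "\<forall>j<n. x j \<in> Vs f C D" using Vs_asymptotic assms(10) x(2) by blast
    moreover have "scrambled f \<F> \<G> n r x" using scrambled_asymptotic[OF assms(6,7,11)] r x(2) by blast
    ultimately show ?thesis using x(1) by blast
  qed
  ultimately show "dense_chaotic f \<F> \<G> n r (Vs f C D)" unfolding dense_chaotic_def by blast
qed

end
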